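(* Let $\mathbf L\in\mathbb R_+^{n\times k}$ and let $\boldsymbol\psi:\mathcal C\to\mathbb R_+^n$ be $\mathbf L$-calibrated. Then for every sequence $\{\mathbf z_m\}$ of points in $\mathcal S_\psi$ there exists $t\in[k]$ such that $\mathcal N^\psi(\{\mathbf z_m\})\subseteq\mathcal Q^{\mathbf L}_t$.
   Context: Notation: $[m]=\{1,\dots,m\}$; $\Delta_n=\{\mathbf p\in\mathbb R_+^n:\sum_i p_i=1\}$. A loss matrix $\mathbf L\in\mathbb R_+^{n\times k}$ has columns $\boldsymbol\ell_t$, $t\in[k]$. Standing assumption: for each $t\in[k]$ there is $\mathbf p\in\Delta_n$ with $\operatorname{argmin}_{t'}\mathbf p^\top\boldsymbol\ell_{t'}=\{t\}$. A surrogate loss is $\boldsymbol\psi:\mathcal C\to\mathbb R_+^n$ with $\mathcal C\subseteq\mathbb R^d$ convex; $\mathcal R_\psi=\boldsymbol\psi(\mathcal C)$, $\mathcal S_\psi=\operatorname{conv}(\mathcal R_\psi)$. $\boldsymbol\psi$ is $\mathbf L$-calibrated if there is $\mathrm{pred}:\mathcal C\to[k]$ such that for all $\mathbf p\in\Delta_n$: $\inf_{\mathbf u\in\mathcal C:\mathrm{pred}(\mathbf u)\notin\operatorname{argmin}_t\mathbf p^\top\boldsymbol\ell_t}\mathbf p^\top\boldsymbol\psi(\mathbf u)>\inf_{\mathbf u\in\mathcal C}\mathbf p^\top\boldsymbol\psi(\mathbf u)$. Trigger probability set: $\mathcal Q^{\mathbf L}_t=\{\mathbf p\in\Delta_n: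 t\in\operatorname{argmin}_{t'\in[k]}\mathbf p^\top\boldsymbol\ell_{t'}\}$. Positive normal set at a sequence $\{\mathbf z_m\}$ in $\mathcal S_\psi$: $\mathcal N^\psi(\{\mathbf z_m\})=\{\mathbf p\in\Delta_n:\lim_{m\to\infty}\mathbf p^\top\mathbf z_m\text{ exists and equals }\inf_{\mathbf z'\in\mathcal S_\psi}\mathbf p^\top\mathbf z'\}$. *)

theory Defs
  imports "HOL-Analysis.Analysis"
begin

text \<open>Vectors in R^n are modelled as real^'n for a finite index type 'n (so [n] = UNIV::'n set),
  and the label set [k] is a finite type 'k. A loss matrix is given by its columns
  L :: 'k => real^'n.\<close>

definition prob_simplex :: "(real^'n) set" where
  "prob_simplex = {p. (\<forall>i. 0 \<le> p $ i) \<and> (\<Sum>i\<in>UNIV. p $ i) = 1}"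

definition nonneg_vec :: "real^'n \<Rightarrow> bool" where
  "nonneg_vec v \<longleftrightarrow> (\<forall>i. 0 \<le> v $ i)"

definition loss_argmin :: "('k::finite \<Rightarrow> real^'n) \<Rightarrow> real^'n \<Rightarrow> 'k set" where
  "loss_argmin L p = {t. \<forall>t'. p \<bullet> L t \<le> p \<bullet> L t'}"

definition standing_assumption :: "('k::finite \<Rightarrow> real^'n) \<Rightarrow> bool" where
  "standing_assumption L \<longleftrightarrow> (\<forall>t. \<exists>p\<in>prob_simplex. loss_argmin L p = {t})"

definition L_calibrated ::
  "('k::finite \<Rightarrow> real^'n) \<Rightarrow> 'c set \<Rightarrow> ('c \<Rightarrow> real^'n) \<Rightarrow> bool" where
  "L_calibrated L C psi \<longleftrightarrow>
     (\<exists>pred :: 'c \<Rightarrow> 'k. \<forall>p\<in>prob_simplex.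
        ({u\<in>C. pred u \<notin> loss_argmin L p} \<noteq> {} \<longrightarrow>
         (INF u\<in>{u\<in>C. pred u \<notin> loss_argmin L p}. p \<bullet> psi u) > (INF u\<in>C. p \<bullet> psi u)))"

text \<open>Convention: an infimum over the empty set is +infinity, so the calibration inequality
  holds trivially when no u mispredicts; all infima involved are bounded below by 0.\<close>

definition trigger_set :: "('k::finite \<Rightarrow> real^'n) \<Rightarrow> 'k \<Rightarrow> (real^'n) set" where
  "trigger_set L t = {p\<in>prob_simplex. t \<in> loss_argmin L p}"

definition S_psi :: "'c set \<Rightarrow> ('c \<Rightarrow> real^'n) \<Rightarrow> (real^'n) set" where
  "S_psi C psi = convex hull (psi ` C)"

definition positive_normal_set ::
  "'c set \<Rightarrow> ('c \<Rightarrow> real^'n) \<Rightarrow> (nat \<Rightarrow> real^'n) \<Rightarrow> (real^'n) set" where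
  "positive_normal_set C psi z = {p\<in>prob_simplex.
      ((\<lambda>m. p \<bullet> z m) \<longlongrightarrow> (INF z'\<in>S_psi C psi. p \<bullet> z')) sequentially}"

end

theory Submission
  imports Defs
begin

(* Fix a predictor pred witnessing calibration and write every z m as a
   finite convex combination of points psi u, u \<in> C.  Label each such point by the
   prediction pred u (for a chosen preimage u).  By pigeonhole, some label t carries weight at least 1/k in the
   decompositions of infinitely many z m.  If p is a positive normal at (z m) but t is
   not optimal for p, calibration yields a margin \<delta> > 0 by which every point labelled
   t exceeds the optimal risk inf_{S_psi} p\<bullet>z'; hence p\<bullet>z m exceeds that infimum by
   \<delta>/k infinitely often, contradicting convergence. *)

lemma inner_nonneg_vec:
  fixes p v :: "real^'n"
  assumes "nonneg_vec p" "nonneg_vec v"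
  shows "0 \<le> p \<bullet> v"
  using assms unfolding nonneg_vec_def inner_vec_def by (auto intro!: sum_nonneg)

lemma prob_simplex_nonneg: "p \<in> prob_simplex \<Longrightarrow> nonneg_vec p"
  unfolding prob_simplex_def nonneg_vec_def by auto

lemma convex_nonneg_vec: "convex {v::real^'n. nonneg_vec v}"
  unfolding convex_def nonneg_vec_def by (auto intro!: add_nonneg_nonneg mult_nonneg_nonneg)

lemma S_psi_nonneg:
  assumes "\<forall>u\<in>C. nonneg_vec (psi u)"
  shows "S_psi C psi \<subseteq> {v. nonneg_vec v}"
  unfolding S_psi_def using assms convex_nonneg_vec by (intro hull_minimal) auto

lemma S_psi_INF_le:
  assumes "\<forall>u\<in>C. nonneg_vec (psi u)" "nonneg_vec p" "u \<in> C"
  shows "(INF z'\<in>S_psi C psi. p \<bullet> z') \<le> p \<bullet> psi u"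
proof (rule cINF_lower)
  show "psi u \<in> S_psi C psi"
    using assms(3) unfolding S_psi_def by (intro hull_inc imageI)
  show "bdd_below ((\<lambda>z'. p \<bullet> z') ` S_psi C psi)"
    using S_psi_nonneg[OF assms(1)] assms(2) inner_nonneg_vec by (intro bdd_belowI2[of _ 0]) blast
qed

lemma calibration_margin:
  fixes pred :: "'c \<Rightarrow> 'k::finite"
  assumes calib: "{u\<in>C. pred u \<notin> loss_argmin L p} \<noteq> {} \<longrightarrow>
         (INF u\<in>{u\<in>C. pred u \<notin> loss_argmin L p}. p \<bullet> psi u) > (INF u\<in>C. p \<bullet> psi u)"
    and psi_nonneg: "\<forall>u\<in>C. nonneg_vec (psi u)" and p: "nonneg_vec p"
    and u0: "u0 \<in> C" "pred u0 \<notin> loss_argmin L p"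
  obtains \<delta> where "\<delta> > 0"
    "\<And>u. u \<in> C \<Longrightarrow> pred u \<notin> loss_argmin L p \<Longrightarrow> (INF u\<in>C. p \<bullet> psi u) + \<delta> \<le> p \<bullet> psi u"
proof
  define M where "M = {u\<in>C. pred u \<notin> loss_argmin L p}"
  show "(INF u\<in>M. p \<bullet> psi u) - (INF u\<in>C. p \<bullet> psi u) > 0"
    using calib u0 unfolding M_def by auto
  fix u assume "u \<in> C" "pred u \<notin> loss_argmin L p"
  moreover have "bdd_below ((\<lambda>u. p \<bullet> psi u) ` M)"
    using psi_nonneg p inner_nonneg_vec unfolding M_def by (intro bdd_belowI2[of _ 0]) auto
  ultimately have "(INF u\<in>M. p \<bullet> psi u) \<le> p \<bullet> psi u"
    unfolding M_def by (intro cINF_lower) auto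
  then show "(INF u\<in>C. p \<bullet> psi u) + ((INF u\<in>M. p \<bullet> psi u) - (INF u\<in>C. p \<bullet> psi u)) \<le> p \<bullet> psi u"
    by simp
qed

lemma heavy_label:
  fixes lab :: "'a \<Rightarrow> 'k::finite"
  assumes "finite S" "sum w S = 1"
  shows "\<exists>t. 1 / real CARD('k) \<le> sum w {x\<in>S. lab x = t}"
proof (rule ccontr)
  assume "\<not> ?thesis"
  then have "(\<Sum>t\<in>UNIV. sum w {x\<in>S. lab x = t}) < (\<Sum>t\<in>(UNIV::'k set). 1 / real CARD('k))"
    by (intro sum_strict_mono) (auto simp: not_le)
  also have "\<dots> = 1" by simp
  also have "1 = (\<Sum>t\<in>UNIV. sum w {x\<in>S. lab x = t})"
    using sum.group[OF assms(1) finite[of UNIV], of lab w] assms(2) by simp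
  finally show False by simp
qed

lemma frequently_heavy_label:
  fixes lab :: "'a \<Rightarrow> 'k::finite"
  assumes "\<And>m. finite (S m)" "\<And>m. sum (w m) (S m) = 1"
  shows "\<exists>t. \<exists>\<^sub>F m in sequentially. 1 / real CARD('k) \<le> sum (w m) {x\<in>S m. lab x = t}"
proof -
  have "\<exists>T. \<forall>m. 1 / real CARD('k) \<le> sum (w m) {x\<in>S m. lab x = T m}"
    by (rule choice) (use heavy_label assms in blast)
  then obtain T where T: "\<And>m. 1 / real CARD('k) \<le> sum (w m) {x\<in>S m. lab x = T m}"
    by blast
  obtain m0 where "infinite {m\<in>UNIV. T m = T m0}"
    using pigeonhole_infinite[of "UNIV::nat set" T] by auto
  then have "\<exists>\<^sub>F m in sequentially. T m = T m0"
    by (simp add: frequently_cofinite flip: cofinite_eq_sequentially)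
  then have "\<exists>\<^sub>F m in sequentially. 1 / real CARD('k) \<le> sum (w m) {x\<in>S m. lab x = T m0}"
    by (rule frequently_elim1) (use T in metis)
  then show ?thesis by blast
qed

lemma convex_combination_excess:
  fixes p :: "'a::real_inner"
  assumes S: "finite S" "\<And>x. x \<in> S \<Longrightarrow> 0 \<le> w x" "sum w S = 1"
    and above: "\<And>x. x \<in> S \<Longrightarrow> h \<le> p \<bullet> x"
    and B: "B \<subseteq> S" "\<And>x. x \<in> B \<Longrightarrow> h + \<delta> \<le> p \<bullet> x"
  shows "h + \<delta> * sum w B \<le> p \<bullet> (\<Sum>x\<in>S. w x *\<^sub>R x)"
proof -
  have "\<delta> * sum w B = (\<Sum>x\<in>B. w x * \<delta>)"
    by (simp add: sum_distrib_left mult.commute)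
  also have "\<dots> \<le> (\<Sum>x\<in>B. w x * (p \<bullet> x - h))"
  proof (intro sum_mono mult_left_mono)
    fix x assume "x \<in> B"
    then show "\<delta> \<le> p \<bullet> x - h" "0 \<le> w x" using S(2) B(1) B(2)[of x] by auto
  qed
  also have "\<dots> \<le> (\<Sum>x\<in>S. w x * (p \<bullet> x - h))"
    using S above B(1) by (intro sum_mono2) (auto intro!: mult_nonneg_nonneg)
  also have "\<dots> = p \<bullet> (\<Sum>x\<in>S. w x *\<^sub>R x) - h"
    using S(3) by (simp add: inner_sum_right right_diff_distrib sum_subtractf
        flip: sum_distrib_right)
  finally show ?thesis by simp
qed

lemma convex_hull_decomposition_seq:
  assumes "\<And>m. z m \<in> convex hull A"
  obtains S w where "\<And>m. finite (S m)" "\<And>m. S m \<subseteq> A" "\<And>m x. x \<in> S m \<Longrightarrow> 0 \<le> w m x"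
    "\<And>m. sum (w m) (S m) = 1" "\<And>m. (\<Sum>x\<in>S m. w m x *\<^sub>R x) = z m"
proof -
  have "\<forall>m. \<exists>S w. finite S \<and> S \<subseteq> A \<and> (\<forall>x\<in>S. 0 \<le> w x) \<and> sum w S = 1
              \<and> (\<Sum>x\<in>S. w x *\<^sub>R x) = z m"
    using assms by (simp add: convex_hull_explicit)
  then obtain S w where "\<forall>m. finite (S m) \<and> S m \<subseteq> A \<and> (\<forall>x\<in>S m. 0 \<le> w m x)
              \<and> sum (w m) (S m) = 1 \<and> (\<Sum>x\<in>S m. w m x *\<^sub>R x) = z m"
    by metis
  then show ?thesis using that by blast
qed

lemma suboptimal_label_margin:
  fixes pred :: "'c \<Rightarrow> 'k::finite"
  assumes calib: "\<forall>p\<in>prob_simplex. ({u\<in>C. pred u \<notin> loss_argmin L p} \<noteq> {} \<longrightarrow>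
         (INF u\<in>{u\<in>C. pred u \<notin> loss_argmin L p}. p \<bullet> psi u) > (INF u\<in>C. p \<bullet> psi u))"
    and psi_nonneg: "\<forall>u\<in>C. nonneg_vec (psi u)"
    and p: "p \<in> prob_simplex" and t: "t \<notin> loss_argmin L p"
    and u0: "u0 \<in> C" "pred u0 = t"
  obtains \<delta> where "\<delta> > 0"
    "\<And>u. u \<in> C \<Longrightarrow> pred u = t \<Longrightarrow> (INF z'\<in>S_psi C psi. p \<bullet> z') + \<delta> \<le> p \<bullet> psi u"
proof -
  have p_nonneg: "nonneg_vec p"
    using p by (rule prob_simplex_nonneg)
  obtain \<delta> where \<delta>: "\<delta> > 0"
    "\<And>u. u \<in> C \<Longrightarrow> pred u \<notin> loss_argmin L p \<Longrightarrow> (INF u\<in>C. p \<bullet> psi u) + \<delta> \<le> p \<bullet> psi u"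
    using calibration_margin[OF bspec[OF calib p] psi_nonneg p_nonneg u0(1)] u0(2) t
    by blast
  have "(INF z'\<in>S_psi C psi. p \<bullet> z') \<le> (INF u\<in>C. p \<bullet> psi u)"
    using u0(1) S_psi_INF_le[OF psi_nonneg p_nonneg] by (intro cINF_greatest) auto
  then show ?thesis
    using that \<delta> t by force
qed

text \<open>The core argument: a label t that is heavy infinitely often in the decompositions
  of z m must be optimal for every positive normal p at (z m); otherwise p\<bullet>z m would
  stay a fixed amount above its limit infinitely often.\<close>
lemma positive_normal_subset_trigger:
  fixes pred :: "'c \<Rightarrow> 'k::finite" and z :: "nat \<Rightarrow> real^'n"
  assumes calib: "\<forall>p\<in>prob_simplex. ({u\<in>C. pred u \<notin> loss_argmin L p} \<noteq> {} \<longrightarrow>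
         (INF u\<in>{u\<in>C. pred u \<notin> loss_argmin L p}. p \<bullet> psi u) > (INF u\<in>C. p \<bullet> psi u))"
    and psi_nonneg: "\<forall>u\<in>C. nonneg_vec (psi u)"
    and S: "\<And>m. finite (S m)" "\<And>m. S m \<subseteq> psi ` C" "\<And>m x. x \<in> S m \<Longrightarrow> 0 \<le> w m x"
      "\<And>m. sum (w m) (S m) = 1" "\<And>m. (\<Sum>x\<in>S m. w m x *\<^sub>R x) = z m"
    and heavy: "\<exists>\<^sub>F m in sequentially.
      1 / real CARD('k) \<le> sum (w m) {x\<in>S m. pred (inv_into C psi x) = t}"
  shows "positive_normal_set C psi z \<subseteq> trigger_set L t"
proof
  fix p assume "p \<in> positive_normal_set C psi z"
  define H where "H = (INF z'\<in>S_psi C psi. p \<bullet> z')"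
  have p: "p \<in> prob_simplex" and lim: "((\<lambda>m. p \<bullet> z m) \<longlongrightarrow> H) sequentially"
    using \<open>p \<in> positive_normal_set C psi z\<close> unfolding positive_normal_set_def H_def by auto
  show "p \<in> trigger_set L t"
  proof (rule ccontr)
    assume "p \<notin> trigger_set L t"
    then have t: "t \<notin> loss_argmin L p"
      using p unfolding trigger_set_def by simp
    define K where "K = real CARD('k)"
    define B where "B m = {x\<in>S m. pred (inv_into C psi x) = t}" for m
    have preimage: "inv_into C psi x \<in> C" "psi (inv_into C psi x) = x" if "x \<in> S m" for x m
      using S(2) that by (auto intro: inv_into_into f_inv_into_f)
    obtain m1 where "1 / K \<le> sum (w m1) (B m1)"
      using frequently_ex[OF heavy] unfolding K_def B_def by blast
    then have "B m1 \<noteq> {}"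
      by (auto simp: K_def)
    then obtain x1 where "x1 \<in> B m1" by blast
    then obtain \<delta> where \<delta>: "\<delta> > 0" "\<And>u. u \<in> C \<Longrightarrow> pred u = t \<Longrightarrow> H + \<delta> \<le> p \<bullet> psi u"
      using suboptimal_label_margin[OF calib psi_nonneg p t, of "inv_into C psi x1"] preimage
      unfolding B_def H_def by auto
    have gap: "H + \<delta> / K \<le> p \<bullet> z m" if heavy_m: "1 / K \<le> sum (w m) (B m)" for m
    proof -
      have "H + \<delta> * sum (w m) (B m) \<le> p \<bullet> z m"
        unfolding S(5)[symmetric]
      proof (rule convex_combination_excess[OF S(1,3,4)])
        show "H \<le> p \<bullet> x" if "x \<in> S m" for x
          using S_psi_INF_le[OF psi_nonneg prob_simplex_nonneg[OF p] preimage(1)[OF that]]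
            preimage(2)[OF that] unfolding H_def by simp
        show "B m \<subseteq> S m"
          unfolding B_def by auto
        show "H + \<delta> \<le> p \<bullet> x" if "x \<in> B m" for x
          using \<delta>(2)[of "inv_into C psi x"] preimage[of x m] that unfolding B_def by auto
      qed
      moreover have "\<delta> / K \<le> \<delta> * sum (w m) (B m)"
        using mult_left_mono[OF heavy_m, of \<delta>] \<delta>(1) by simp
      ultimately show ?thesis by linarith
    qed
    have "\<exists>\<^sub>F m in sequentially. H + \<delta> / K \<le> p \<bullet> z m"
      using heavy unfolding K_def[symmetric] B_def[symmetric] by (rule frequently_elim1) (rule gap)
    moreover have "\<forall>\<^sub>F m in sequentially. p \<bullet> z m < H + \<delta> / K"
      using lim \<delta>(1) by (intro order_tendstoD(2)) (auto simp: K_def)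
    ultimately have "\<exists>\<^sub>F m in sequentially. False"
      by (rule frequently_eventually_frequently[THEN frequently_elim1]) linarith
    then show False by simp
  qed
qed

theorem mainTheorem4:
  fixes L :: "'k::finite \<Rightarrow> real^'n"
    and C :: "'c::euclidean_space set"
    and psi :: "'c \<Rightarrow> real^'n"
    and z :: "nat \<Rightarrow> real^'n"
  assumes L_nonneg: "\<forall>t. nonneg_vec (L t)"
    and standing: "standing_assumption L"
    and C_convex: "convex C"
    and psi_nonneg: "\<forall>u\<in>C. nonneg_vec (psi u)"
    and calibrated: "L_calibrated L C psi"
    and z_in: "\<forall>m. z m \<in> S_psi C psi"
  shows "\<exists>t. positive_normal_set C psi z \<subseteq> trigger_set L t"
proof -
  obtain pred :: "'c \<Rightarrow> 'k" where calib: "\<forall>p\<in>prob_simplex.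
        ({u\<in>C. pred u \<notin> loss_argmin L p} \<noteq> {} \<longrightarrow>
         (INF u\<in>{u\<in>C. pred u \<notin> loss_argmin L p}. p \<bullet> psi u) > (INF u\<in>C. p \<bullet> psi u))"
    using calibrated unfolding L_calibrated_def by blast
  obtain S w where S: "\<And>m. finite (S m)" "\<And>m. S m \<subseteq> psi ` C" "\<And>m x. x \<in> S m \<Longrightarrow> 0 \<le> w m x"
      "\<And>m. sum (w m) (S m) = 1" "\<And>m. (\<Sum>x\<in>S m. w m x *\<^sub>R x) = z m"
    using convex_hull_decomposition_seq[of z "psi ` C"] z_in unfolding S_psi_def by blast
  obtain t where "\<exists>\<^sub>F m in sequentially.
      1 / real CARD('k) \<le> sum (w m) {x\<in>S m. pred (inv_into C psi x) = t}"
    using frequently_heavy_label[of S w "\<lambda>x. pred (inv_into C psi x)"] S(1,4) by blast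
  then show ?thesis
    using positive_normal_subset_trigger[where S=S and w=w and z=z, OF calib psi_nonneg S]
    by blast
qed

end
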